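(* Let $\mathcal L$ be a linearly ordered non-discrete MV-algebra and let $\mathcal F,\mathcal G$ be filters (in the sense below). Then $\mathcal F\sqsubseteq\!\!\to\mathcal G=\{1\}$ if and only if either $\mathcal G\subseteq\mathcal F$, or there is $g\in L$ with $\mathcal G=[g,1]$ and $\mathcal F=\,]g,1]$.
   Context: $\mathcal L=(L,\oplus,\lnot,0)$ is a linearly ordered MV-algebra. We write $1=\lnot0$ and $x\to y=\lnot x\oplus y$. Non-discrete means no element has an immediate successor or an immediate predecessor. A "filter" means a nonempty proper upward-closed subset $\mathcal F$ of $L$ with kernel $\mathcal K(\mathcal F)=\{z:\forall a\notin\mathcal F,\ z\to a\notin\mathcal F\}=\{1\}$. We write $[g,1]=\{x:x\ge g\}$ and $]g,1]=\{x:x>g\}$. For upward-closed $\mathcal F$ and $a\in L$, let $\mathcal F_a=\{z:z\to a\notin\mathcal F\}$. For $\mathcal F\subseteq\mathcal G$ we put $\mathcal F\sqsubseteq\!\!\to\mathcal G=\bigcap_{a\in L\setminus\mathcal G}\mathcal F_a$, and in general $\mathcal F\sqsubseteq\!\!\to\mathcal G:=(\mathcal F\cap\mathcal G)\sqsubseteq\!\!\to\mathcal G$. *)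

theory Defs
  imports Main
begin

definition mv_algebra :: "('a \<Rightarrow> 'a \<Rightarrow> 'a) \<Rightarrow> ('a \<Rightarrow> 'a) \<Rightarrow> 'a \<Rightarrow> bool" where
  "mv_algebra pl ng z \<longleftrightarrow>
     (\<forall>x y w. pl (pl x y) w = pl x (pl y w)) \<and>
     (\<forall>x y. pl x y = pl y x) \<and>
     (\<forall>x. pl x z = x) \<and>
     (\<forall>x. ng (ng x) = x) \<and>
     (\<forall>x. pl x (ng z) = ng z) \<and>
     (\<forall>x y. pl (ng (pl (ng x) y)) y = pl (ng (pl (ng y) x)) x)"

definition mv_one :: "('a \<Rightarrow> 'a) \<Rightarrow> 'a \<Rightarrow> 'a" where
  "mv_one ng z = ng z"

definition mv_impl :: "('a \<Rightarrow> 'a \<Rightarrow> 'a) \<Rightarrow> ('a \<Rightarrow> 'a) \<Rightarrow> 'a \<Rightarrow> 'a \<Rightarrow> 'a" where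
  "mv_impl pl ng x y = pl (ng x) y"

definition mv_le :: "('a \<Rightarrow> 'a \<Rightarrow> 'a) \<Rightarrow> ('a \<Rightarrow> 'a) \<Rightarrow> 'a \<Rightarrow> 'a \<Rightarrow> 'a \<Rightarrow> bool" where
  "mv_le pl ng z x y \<longleftrightarrow> mv_impl pl ng x y = mv_one ng z"

definition mv_less :: "('a \<Rightarrow> 'a \<Rightarrow> 'a) \<Rightarrow> ('a \<Rightarrow> 'a) \<Rightarrow> 'a \<Rightarrow> 'a \<Rightarrow> 'a \<Rightarrow> bool" where
  "mv_less pl ng z x y \<longleftrightarrow> mv_le pl ng z x y \<and> x \<noteq> y"

definition linear_mv :: "('a \<Rightarrow> 'a \<Rightarrow> 'a) \<Rightarrow> ('a \<Rightarrow> 'a) \<Rightarrow> 'a \<Rightarrow> bool" where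
  "linear_mv pl ng z \<longleftrightarrow> mv_algebra pl ng z \<and>
     (\<forall>x y. mv_le pl ng z x y \<or> mv_le pl ng z y x)"

definition immediate_successor :: "('a \<Rightarrow> 'a \<Rightarrow> 'a) \<Rightarrow> ('a \<Rightarrow> 'a) \<Rightarrow> 'a \<Rightarrow> 'a \<Rightarrow> 'a \<Rightarrow> bool" where
  "immediate_successor pl ng z x y \<longleftrightarrow> mv_less pl ng z x y \<and>
     \<not> (\<exists>w. mv_less pl ng z x w \<and> mv_less pl ng z w y)"

definition non_discrete :: "('a \<Rightarrow> 'a \<Rightarrow> 'a) \<Rightarrow> ('a \<Rightarrow> 'a) \<Rightarrow> 'a \<Rightarrow> bool" where
  "non_discrete pl ng z \<longleftrightarrow>
     (\<forall>x. \<not> (\<exists>y. immediate_successor pl ng z x y)) \<and>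
     (\<forall>x. \<not> (\<exists>y. immediate_successor pl ng z y x))"

definition kernel :: "('a \<Rightarrow> 'a \<Rightarrow> 'a) \<Rightarrow> ('a \<Rightarrow> 'a) \<Rightarrow> 'a set \<Rightarrow> 'a set" where
  "kernel pl ng F = {w. \<forall>a. a \<notin> F \<longrightarrow> mv_impl pl ng w a \<notin> F}"

definition up_closed :: "('a \<Rightarrow> 'a \<Rightarrow> 'a) \<Rightarrow> ('a \<Rightarrow> 'a) \<Rightarrow> 'a \<Rightarrow> 'a set \<Rightarrow> bool" where
  "up_closed pl ng z F \<longleftrightarrow> (\<forall>x y. x \<in> F \<longrightarrow> mv_le pl ng z x y \<longrightarrow> y \<in> F)"

definition mv_filter :: "('a \<Rightarrow> 'a \<Rightarrow> 'a) \<Rightarrow> ('a \<Rightarrow> 'a) \<Rightarrow> 'a \<Rightarrow> 'a set \<Rightarrow> bool" where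
  "mv_filter pl ng z F \<longleftrightarrow> F \<noteq> {} \<and> F \<noteq> UNIV \<and> up_closed pl ng z F \<and>
     kernel pl ng F = {mv_one ng z}"

definition sub_a :: "('a \<Rightarrow> 'a \<Rightarrow> 'a) \<Rightarrow> ('a \<Rightarrow> 'a) \<Rightarrow> 'a set \<Rightarrow> 'a \<Rightarrow> 'a set" where
  "sub_a pl ng F a = {w. mv_impl pl ng w a \<notin> F}"

text \<open>F \<sqsubseteq>\<rightarrow> G := (F \<inter> G) \<sqsubseteq>\<rightarrow> G = \<Inter>_{a \<in> L \<setminus> G} (F \<inter> G)_a.\<close>
definition resid :: "('a \<Rightarrow> 'a \<Rightarrow> 'a) \<Rightarrow> ('a \<Rightarrow> 'a) \<Rightarrow> 'a set \<Rightarrow> 'a set \<Rightarrow> 'a set" where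
  "resid pl ng F G = (\<Inter>a\<in>(UNIV - G). sub_a pl ng (F \<inter> G) a)"

definition closed_up_int :: "('a \<Rightarrow> 'a \<Rightarrow> 'a) \<Rightarrow> ('a \<Rightarrow> 'a) \<Rightarrow> 'a \<Rightarrow> 'a \<Rightarrow> 'a set" where
  "closed_up_int pl ng z g = {x. mv_le pl ng z g x}"

definition open_up_int :: "('a \<Rightarrow> 'a \<Rightarrow> 'a) \<Rightarrow> ('a \<Rightarrow> 'a) \<Rightarrow> 'a \<Rightarrow> 'a \<Rightarrow> 'a set" where
  "open_up_int pl ng z g = {x. mv_less pl ng z g x}"

end

theory Submission
  imports Defs
begin

text \<open>
  For up-closed \<open>F, G\<close> the residual \<open>F \<sqsubseteq>\<rightarrow> G\<close> always contains \<open>1\<close>, and it equals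
  the kernel of \<open>G\<close> when \<open>G \<subseteq> F\<close>; this gives one half of the right-to-left
  direction.  If the residual is \<open>{1}\<close> then \<open>G - F\<close> has at most one element, since
  for \<open>b\<^sub>1 \<preceq> b\<^sub>2\<close> in \<open>G - F\<close> the element \<open>b\<^sub>2 \<rightarrow> b\<^sub>1\<close> lies in the residual;
  a one-point gap \<open>{g}\<close> between up-sets of a chain forces \<open>G = [g,1]\<close>, \<open>F = ]g,1]\<close>.
  Conversely, for \<open>G = [g,1]\<close>, \<open>F = ]g,1]\<close> an element \<open>w \<prec> 1\<close> of the residual
  leads, via an element \<open>v\<close> strictly between \<open>w\<close> and \<open>1\<close> (non-discreteness) and the
  kernel condition on \<open>G\<close>, to \<open>w \<rightarrow> a = v \<rightarrow> a = g \<noteq> 1\<close>, contradicting cancellation.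
\<close>

locale mv_alg =
  fixes pl :: "'a \<Rightarrow> 'a \<Rightarrow> 'a" and ng :: "'a \<Rightarrow> 'a" and z :: 'a
  assumes mv: "mv_algebra pl ng z"
begin

abbreviation one :: 'a where "one \<equiv> ng z"
abbreviation le :: "'a \<Rightarrow> 'a \<Rightarrow> bool" (infix "\<preceq>" 50) where "x \<preceq> y \<equiv> mv_le pl ng z x y"
abbreviation lt :: "'a \<Rightarrow> 'a \<Rightarrow> bool" (infix "\<prec>" 50) where "x \<prec> y \<equiv> mv_less pl ng z x y"
abbreviation imp :: "'a \<Rightarrow> 'a \<Rightarrow> 'a" where "imp x y \<equiv> mv_impl pl ng x y"

lemma assoc: "pl (pl x y) w = pl x (pl y w)" using mv unfolding mv_algebra_def by blast
lemma comm: "pl x y = pl y x" using mv unfolding mv_algebra_def by blast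
lemma zero_right: "pl x z = x" using mv unfolding mv_algebra_def by blast
lemma neg_neg [simp]: "ng (ng x) = x" using mv unfolding mv_algebra_def by blast
lemma one_right: "pl x one = one" using mv unfolding mv_algebra_def by blast
lemma lukasiewicz: "pl (ng (pl (ng x) y)) y = pl (ng (pl (ng y) x)) x"
  using mv unfolding mv_algebra_def by blast

lemma zero_left: "pl z x = x" using zero_right comm by metis
lemma one_left: "pl one x = one" using one_right comm by metis

lemma compl: "pl (ng x) x = one"
  using lukasiewicz[of one x] by (simp add: one_right zero_left)

lemma le_iff: "x \<preceq> y \<longleftrightarrow> pl (ng x) y = one"
  by (simp add: mv_le_def mv_impl_def mv_one_def)

lemma le_refl: "x \<preceq> x" using compl le_iff by simp

lemma le_one: "x \<preceq> one" by (simp add: le_iff one_right)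

lemma le_witness: "x \<preceq> y \<Longrightarrow> y = pl (ng (pl (ng y) x)) x"
  using lukasiewicz[of x y] by (simp add: le_iff zero_left)

lemma le_antisym: "x \<preceq> y \<Longrightarrow> y \<preceq> x \<Longrightarrow> x = y"
  using lukasiewicz[of x y] by (simp add: le_iff zero_left)

lemma add_mono: "x \<preceq> y \<Longrightarrow> pl c x \<preceq> pl c y"
proof -
  assume "x \<preceq> y"
  then have y: "y = pl (ng (pl (ng y) x)) x" by (rule le_witness)
  have "pl (ng (pl c x)) (pl c y) = pl (pl (ng (pl c x)) (pl c x)) (ng (pl (ng y) x))"
    using y assoc comm by metis
  also have "\<dots> = one" by (simp add: compl one_left)
  finally show ?thesis by (simp add: le_iff)
qed

lemma le_trans: "x \<preceq> y \<Longrightarrow> y \<preceq> w \<Longrightarrow> x \<preceq> w"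
proof -
  assume xy: "x \<preceq> y" and "y \<preceq> w"
  from \<open>y \<preceq> w\<close> have "pl (ng x) y \<preceq> pl (ng x) w" by (rule add_mono)
  then have "one \<preceq> pl (ng x) w" using xy by (simp add: le_iff)
  then show ?thesis by (simp add: le_iff zero_left)
qed

lemma neg_antitone: "x \<preceq> y \<Longrightarrow> ng y \<preceq> ng x"
  by (simp add: le_iff comm)

lemma imp_antitone: "w \<preceq> v \<Longrightarrow> imp v a \<preceq> imp w a"
  unfolding mv_impl_def using add_mono[OF neg_antitone] comm by metis

lemma imp_mono: "a \<preceq> b \<Longrightarrow> imp w a \<preceq> imp w b"
  unfolding mv_impl_def by (rule add_mono)

lemma imp_one: "imp one a = a" by (simp add: mv_impl_def zero_left)

text \<open>The join law \<open>(b\<^sub>2 \<rightarrow> b\<^sub>1) \<rightarrow> b\<^sub>1 = b\<^sub>1 \<squnion> b\<^sub>2\<close>, here for \<open>b\<^sub>1 \<preceq> b\<^sub>2\<close>.\<close>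
lemma imp_imp: "b1 \<preceq> b2 \<Longrightarrow> imp (imp b2 b1) b1 = b2"
  using lukasiewicz[of b2 b1] by (simp add: le_iff mv_impl_def zero_left)

lemma resid_iff: "w \<in> resid pl ng F G \<longleftrightarrow> (\<forall>a. a \<notin> G \<longrightarrow> imp w a \<notin> F \<inter> G)"
  by (auto simp: resid_def sub_a_def)

lemma one_in_resid: "one \<in> resid pl ng F G"
  by (simp add: resid_iff imp_one)

lemma resid_eq_kernel: "G \<subseteq> F \<Longrightarrow> resid pl ng F G = kernel pl ng G"
  by (auto simp: resid_iff kernel_def)

end

locale lin_mv_alg = mv_alg +
  assumes linear: "x \<preceq> y \<or> y \<preceq> x"
begin

text \<open>Writing \<open>y = x \<oplus> t\<close> and \<open>s = x \<oplus> a\<close>, one gets \<open>s \<oplus> t = s\<close>;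
  comparing \<open>t\<close> with \<open>\<not>s\<close> shows \<open>t = 0\<close>.\<close>
lemma add_cancel_le:
  assumes xy: "x \<preceq> y" and eq: "pl x a = pl y a" and ne: "pl x a \<noteq> one"
  shows "x = y"
proof -
  define t where "t = ng (pl (ng y) x)"
  define s where "s = pl x a"
  have y: "y = pl t x" using le_witness[OF xy] t_def by simp
  have st: "pl s t = s" using eq y s_def assoc comm by metis
  have "pl s (ng (pl s t)) = one" using st compl comm by metis
  moreover have "pl s (ng (pl s t)) = pl (ng (pl (ng s) (ng t))) (ng t)"
    using lukasiewicz[of "ng t" s] comm by simp
  ultimately have m: "ng (pl (ng (pl (ng s) (ng t))) (ng t)) = z" by simp
  have "t = z"
  proof (cases "t \<preceq> ng s")
    case True
    then have "pl (ng s) (ng t) = one" using comm by (metis le_iff)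
    then show ?thesis using m by (simp add: zero_left)
  next
    case False
    then have "ng s \<preceq> t" using linear by blast
    then have "pl s t = one" by (simp add: le_iff)
    then show ?thesis using st ne s_def by simp
  qed
  then show ?thesis using y zero_left by simp
qed

lemma imp_cancel:
  assumes "v \<preceq> w" and "imp w a = imp v a" and "imp w a \<noteq> one"
  shows "v = w"
proof -
  have "ng w = ng v"
    using add_cancel_le[OF neg_antitone[OF assms(1)]] assms(2,3) by (simp add: mv_impl_def)
  then show ?thesis by (metis neg_neg)
qed

text \<open>If the residual is trivial, \<open>G - F\<close> has at most one point: for \<open>b\<^sub>1 \<preceq> b\<^sub>2\<close> in
  \<open>G - F\<close>, every \<open>a \<notin> G\<close> lies below \<open>b\<^sub>1\<close>, so \<open>(b\<^sub>2 \<rightarrow> b\<^sub>1) \<rightarrow> a \<preceq> b\<^sub>2 \<notin> F\<close>; thus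
  \<open>b\<^sub>2 \<rightarrow> b\<^sub>1\<close> is in the residual, hence equals \<open>1\<close>, i.e. \<open>b\<^sub>2 \<preceq> b\<^sub>1\<close>.\<close>
lemma gap_subsingleton:
  assumes F: "up_closed pl ng z F" and G: "up_closed pl ng z G"
    and R: "resid pl ng F G \<subseteq> {one}"
    and b1: "b1 \<in> G - F" and b2: "b2 \<in> G - F"
  shows "b1 = b2"
proof -
  have ordered: "b = b'" if b: "b \<in> G - F" and b': "b' \<in> G - F" and bb': "b \<preceq> b'" for b b'
  proof -
    have "imp b' b \<in> resid pl ng F G"
      unfolding resid_iff
    proof (intro allI impI)
      fix a assume "a \<notin> G"
      then have "a \<preceq> b" using linear[of a b] G b unfolding up_closed_def by blast
      then have "imp (imp b' b) a \<preceq> b'"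
        using imp_mono[of a b "imp b' b"] imp_imp[OF bb'] by simp
      then show "imp (imp b' b) a \<notin> F \<inter> G" using F b' unfolding up_closed_def by blast
    qed
    then have "imp b' b = one" using R by blast
    then have "b' \<preceq> b" by (simp add: mv_le_def mv_one_def)
    then show ?thesis using bb' le_antisym by blast
  qed
  show ?thesis using linear[of b1 b2] ordered[OF b1 b2] ordered[OF b2 b1] by blast
qed

lemma one_point_gap_intervals:
  assumes F: "up_closed pl ng z F" and G: "up_closed pl ng z G"
    and c: "c \<in> G - F" and only_c: "\<And>b. b \<in> G - F \<Longrightarrow> b = c"
  shows "G = closed_up_int pl ng z c \<and> F = open_up_int pl ng z c"
proof -
  have below_c_not_F: "x \<notin> F" if "x \<preceq> c" for x
    using that F c unfolding up_closed_def by blast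
  have F_above_c: "c \<preceq> x" if "x \<in> F" for x
    using linear[of x c] below_c_not_F that by blast
  have G_above_c: "c \<preceq> x" if "x \<in> G" for x
    using linear[of x c] below_c_not_F only_c that le_refl by blast
  have "G = closed_up_int pl ng z c"
    using G c G_above_c unfolding up_closed_def closed_up_int_def by blast
  moreover have "F = open_up_int pl ng z c"
    using G c F_above_c only_c unfolding up_closed_def open_up_int_def mv_less_def by blast
  ultimately show ?thesis ..
qed

lemma trivial_resid_cases:
  assumes F: "up_closed pl ng z F" and G: "up_closed pl ng z G"
    and R: "resid pl ng F G \<subseteq> {one}"
  shows "G \<subseteq> F \<or> (\<exists>g. G = closed_up_int pl ng z g \<and> F = open_up_int pl ng z g)"
proof (cases "G \<subseteq> F")
  case False
  then obtain c where "c \<in> G - F" by blast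
  then show ?thesis
    using one_point_gap_intervals[OF F G] gap_subsingleton[OF F G R] by blast
qed simp

lemma dense_below_one:
  assumes "non_discrete pl ng z" and "w \<prec> one"
  shows "\<exists>v. w \<prec> v \<and> v \<prec> one"
  using assms unfolding non_discrete_def immediate_successor_def by blast

text \<open>Right-to-left direction in the interval case: for \<open>G = [g,1]\<close> with trivial kernel
  and \<open>F = ]g,1]\<close> nonempty, the residual is \<open>{1}\<close>.  An element \<open>w \<prec> v \<prec> 1\<close> of the
  residual gives some \<open>a \<notin> G\<close> with \<open>v \<rightarrow> a \<in> G\<close> (since \<open>v\<close> is not in the kernel);
  then \<open>g \<preceq> v \<rightarrow> a \<preceq> w \<rightarrow> a \<notin> F\<close>, so both equal \<open>g\<close>, and \<open>g \<noteq> 1\<close> gives \<open>v = w\<close>.\<close>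
lemma interval_resid_trivial:
  assumes nd: "non_discrete pl ng z"
    and kerG: "kernel pl ng G = {one}" and Fne: "F \<noteq> {}"
    and G: "G = closed_up_int pl ng z g" and F: "F = open_up_int pl ng z g"
  shows "resid pl ng F G = {one}"
proof -
  have inG: "x \<in> G \<longleftrightarrow> g \<preceq> x" for x using G by (simp add: closed_up_int_def)
  have inF: "x \<in> F \<longleftrightarrow> g \<preceq> x \<and> g \<noteq> x" for x using F by (simp add: open_up_int_def mv_less_def)
  have g_ne_one: "g \<noteq> one"
    using Fne inF le_one le_antisym by blast
  have "w = one" if wR: "w \<in> resid pl ng F G" for w
  proof (rule ccontr)
    assume "w \<noteq> one"
    then have "w \<prec> one" using le_one by (simp add: mv_less_def)
    then obtain v where wv: "w \<prec> v" and v1: "v \<prec> one"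
      using dense_below_one[OF nd] by blast
    have "v \<notin> kernel pl ng G" using kerG v1 by (simp add: mv_less_def)
    then obtain a where aG: "a \<notin> G" and vaG: "imp v a \<in> G"
      by (auto simp: kernel_def)
    have va_wa: "imp v a \<preceq> imp w a" using imp_antitone wv by (simp add: mv_less_def)
    have g_va: "g \<preceq> imp v a" using vaG inG by simp
    have "imp w a \<notin> F \<inter> G" using wR aG resid_iff by blast
    then have wa: "imp w a = g" using le_trans[OF g_va va_wa] inF inG by auto
    then have "imp v a = g" using le_antisym g_va va_wa by simp
    then have "v = w" using imp_cancel[of w v a] wv wa g_ne_one by (simp add: mv_less_def)
    then show False using wv by (simp add: mv_less_def)
  qed
  then show ?thesis using one_in_resid by blast
qed

end

theorem mainTheorem16:
  fixes pl :: "'a \<Rightarrow> 'a \<Rightarrow> 'a" and ng :: "'a \<Rightarrow> 'a" and z :: 'a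
    and F G :: "'a set"
  assumes "linear_mv pl ng z"
    and "non_discrete pl ng z"
    and "mv_filter pl ng z F"
    and "mv_filter pl ng z G"
  shows "resid pl ng F G = {mv_one ng z} \<longleftrightarrow>
           (G \<subseteq> F \<or>
            (\<exists>g. G = closed_up_int pl ng z g \<and> F = open_up_int pl ng z g))"
proof -
  interpret lin_mv_alg pl ng z
    using assms(1) by unfold_locales (auto simp: linear_mv_def)
  have one: "mv_one ng z = ng z" by (simp add: mv_one_def)
  have F: "up_closed pl ng z F" "F \<noteq> {}" using assms(3) by (simp_all add: mv_filter_def)
  have G: "up_closed pl ng z G" "kernel pl ng G = {ng z}"
    using assms(4) by (simp_all add: mv_filter_def one)
  show ?thesis
  proof
    assume "resid pl ng F G = {mv_one ng z}"
    then show "G \<subseteq> F \<or> (\<exists>g. G = closed_up_int pl ng z g \<and> F = open_up_int pl ng z g)"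
      using trivial_resid_cases[OF F(1) G(1)] one by simp
  next
    assume "G \<subseteq> F \<or> (\<exists>g. G = closed_up_int pl ng z g \<and> F = open_up_int pl ng z g)"
    then show "resid pl ng F G = {mv_one ng z}"
      using resid_eq_kernel G(2) interval_resid_trivial[OF assms(2) G(2) F(2)] one by auto
  qed
qed

end
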